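(* Let $n\in\mathbb{N}$, let $c=(c_{i,j})$ be an $n\times(n+1)$ matrix with entries in $\{0,1\}$ such that every row and every column contains at least one entry equal to $1$, let $\sigma_1,\ldots,\sigma_n>0$, $\gamma_1,\ldots,\gamma_{n+1}>0$, $\gamma^\ast=\gamma_1+\cdots+\gamma_{n+1}$. Let $\mathbf{X}=(X_1,\ldots,X_n)'$ have decumulative distribution function $\mathbf{P}[X_1>x_1,\ldots,X_n>x_n]=\prod_{j=1}^{n+1}(1+\sum_{i=1}^nc_{i,j}x_i/\sigma_i)^{-\gamma_j}$ for $(x_1,\ldots,x_n)'\in(0,\infty)^n$, and $X_-=\min_iX_i$. Put $\alpha_j=(\sum_{i=1}^nc_{i,j}/\sigma_i)^{-1}$, $\alpha_+(\boldsymbol{\sigma})=\max_j\alpha_j$, and let $p_k=c_+\delta_k$, $k=0,1,\ldots$, where $c_+=\prod_{j=1}^{n+1}(\alpha_j/\alpha_+(\boldsymbol{\sigma}))^{\gamma_j}$, $\delta_0=1$, $\delta_k=k^{-1}\sum_{l=1}^k\sum_{j=1}^{n+1}\gamma_j(1-\alpha_j/\alpha_+(\boldsymbol{\sigma}))^l\delta_{k-l}$. Let $Q$ be a nonnegative integer-valued random variable with \[ q_k=\mathbf{P}[Q=k]=\frac{1}{\mathbf{E}[X_-]}\frac{\alpha_+(\boldsymbol{\sigma})}{\gamma^\ast+k-1}p_k,\quad k=0,1,\ldots, \] and let $X_-^\ast$ have decumulative distribution function $\overline{F}_{X_-^\ast}(x)=\sum_{k=0}^\infty q_k(1+x/\alpha_+(\boldsymbol{\sigma}))^{-(\gamma^\ast+k-1)}$,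 i.e. $X_-^\ast\sim Pa(II)(\alpha_+(\boldsymbol{\sigma}),\gamma^\ast+Q-1)$. Then for $q\in[0,1)$, whenever $CTE_q[X_-]$ is finite, \[ CTE_q[X_-]=\mathbf{E}[X_-]\frac{\overline{F}_{X_-^\ast}(VaR_q[X_-])}{1-q}+VaR_q[X_-]. \]
   Context: $VaR_q[Y]=\inf\{x:\mathbf{P}[Y\le x]\ge q\}$ and $CTE_q[Y]=\mathbf{E}[Y\mid Y>VaR_q[Y]]$. $Pa(II)(\sigma,\alpha)$ has decumulative distribution function $(1+x/\sigma)^{-\alpha}$, $x>0$, and a random tail index denotes the corresponding mixture. *)

theory Defs
  imports "HOL-Probability.Probability"
begin

text \<open>The infimum is taken over
  the nonnegative half-line (the support of a positive loss); for q > 0 and a loss with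
  P[Y \<le> 0] = 0 this coincides with inf{x. P[Y \<le> x] \<ge> q}, and for q = 0 it gives
  the left endpoint 0 of the support instead of -infinity.\<close>
definition VaR :: "'a measure \<Rightarrow> ('a \<Rightarrow> real) \<Rightarrow> real \<Rightarrow> real" where
  "VaR M Y q = Inf {x. 0 \<le> x \<and> q \<le> measure M {\<omega> \<in> space M. Y \<omega> \<le> x}}"

definition CTE :: "'a measure \<Rightarrow> ('a \<Rightarrow> real) \<Rightarrow> real \<Rightarrow> real" where
  "CTE M Y q = (LINT \<omega>:{\<omega> \<in> space M. VaR M Y q < Y \<omega>}|M. Y \<omega>)
       / measure M {\<omega> \<in> space M. VaR M Y q < Y \<omega>}"

text \<open>alpha_j = (sum_i c_{i,j}/sigma_i)^{-1}; rows indexed i < n, columns j \<le> n.\<close>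
definition alpha_col :: "nat \<Rightarrow> (nat \<Rightarrow> nat \<Rightarrow> real) \<Rightarrow> (nat \<Rightarrow> real) \<Rightarrow> nat \<Rightarrow> real" where
  "alpha_col n c \<sigma> j = inverse (\<Sum>i<n. c i j / \<sigma> i)"

definition alpha_plus :: "nat \<Rightarrow> (nat \<Rightarrow> nat \<Rightarrow> real) \<Rightarrow> (nat \<Rightarrow> real) \<Rightarrow> real" where
  "alpha_plus n c \<sigma> = Max (alpha_col n c \<sigma> ` {..n})"

text \<open>delta_0 = 1, delta_k = k^{-1} sum_{l=1}^k sum_{j\<le>n} gamma_j (1 - r_j)^l delta_{k-l},
  with r_j = alpha_j / alpha_plus (here the summation index l is shifted by one).\<close>
fun delta_seq :: "nat \<Rightarrow> (nat \<Rightarrow> real) \<Rightarrow> (nat \<Rightarrow> real) \<Rightarrow> nat \<Rightarrow> real" where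
  "delta_seq n r \<gamma> 0 = 1"
| "delta_seq n r \<gamma> (Suc k) =
     (\<Sum>l<Suc k. \<Sum>j\<le>n. \<gamma> j * (1 - r j) ^ (Suc l) * delta_seq n r \<gamma> (k - l)) / real (Suc k)"

definition c_plus :: "nat \<Rightarrow> (nat \<Rightarrow> nat \<Rightarrow> real) \<Rightarrow> (nat \<Rightarrow> real) \<Rightarrow> (nat \<Rightarrow> real) \<Rightarrow> real" where
  "c_plus n c \<sigma> \<gamma> = (\<Prod>j\<le>n. (alpha_col n c \<sigma> j / alpha_plus n c \<sigma>) powr (\<gamma> j))"

definition p_seq :: "nat \<Rightarrow> (nat \<Rightarrow> nat \<Rightarrow> real) \<Rightarrow> (nat \<Rightarrow> real) \<Rightarrow> (nat \<Rightarrow> real) \<Rightarrow> nat \<Rightarrow> real" where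
  "p_seq n c \<sigma> \<gamma> k = c_plus n c \<sigma> \<gamma> *
     delta_seq n (\<lambda>j. alpha_col n c \<sigma> j / alpha_plus n c \<sigma>) \<gamma> k"

end

theory Submission
  imports Defs "HOL-Real_Asymp.Real_Asymp"
begin

text \<open>X_- has survival function \<Prod>j (1 + x / \<alpha> j) powr - \<gamma> j. With W = 1 + x / \<alpha>_+ this is
  c_+ W powr - \<gamma>* times \<Prod>j (1 - (1 - \<alpha> j / \<alpha>_+) / W) powr - \<gamma> j, and the \<delta>_k are the Taylor
  coefficients of the latter product in 1 / W: its logarithmic derivative turns the recursion
  for \<delta>_k into a linear differential equation. So X_- is a mixture of Pa(II)(\<alpha>_+, \<gamma>* + k) with
  weights p_k. Then E[X_-; X_- > v] = v P[X_- > v] + \<integral>_v^\<infinity> P[X_- > x] dx, and integrating the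
  Pareto tails term by term gives E[X_-] F*(v), where F* is the survival function of X_-*.
  Dividing by P[X_- > VaR_q] = 1 - q yields the formula.\<close>

section \<open>The generating function of delta_seq\<close>

lemma sum_power_Suc_le:
  fixes x :: real
  assumes "0 \<le> x" "x < 1"
  shows "(\<Sum>l<N. x ^ Suc l) \<le> x / (1 - x)"
proof -
  have "(\<Sum>l<N. x ^ Suc l) = x * (\<Sum>l<N. x ^ l)" by (simp add: sum_distrib_left)
  also have "\<dots> = x * ((1 - x ^ N) / (1 - x))" using assms by (subst sum_gp_strict) auto
  also have "\<dots> \<le> x * (1 / (1 - x))"
    using assms by (intro mult_left_mono divide_right_mono) auto
  finally show ?thesis by simp
qed

context
  fixes n :: nat and r \<gamma> :: "nat \<Rightarrow> real"
  assumes r_pos: "\<forall>j\<le>n. 0 < r j" and r_le_1: "\<forall>j\<le>n. r j \<le> 1"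
    and \<gamma>_pos: "\<forall>j\<le>n. 0 < \<gamma> j"
begin

lemma delta_seq_nonneg: "0 \<le> delta_seq n r \<gamma> k"
proof (induction k rule: less_induct)
  case (less k)
  show ?case
  proof (cases k)
    case (Suc m)
    have "0 \<le> \<gamma> j * (1 - r j) ^ Suc l * delta_seq n r \<gamma> (m - l)" if "l < Suc m" "j \<le> n" for l j
      using less[of "m - l"] that r_le_1 \<gamma>_pos Suc by (intro mult_nonneg_nonneg) (auto intro: less_imp_le)
    then show ?thesis
      unfolding Suc delta_seq.simps by (intro divide_nonneg_nonneg sum_nonneg) auto
  qed simp
qed

lemma delta_seq_Suc_le:
  assumes B: "\<forall>j\<le>n. 1 - r j \<le> B" "B < \<rho>" and K: "0 \<le> K"
    and IH: "\<forall>l\<le>m. delta_seq n r \<gamma> l \<le> K * \<rho> ^ l"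
  shows "real (Suc m) * delta_seq n r \<gamma> (Suc m)
           \<le> K * \<rho> ^ Suc m * ((\<Sum>j\<le>n. \<gamma> j) * B / (\<rho> - B))"
proof -
  have B0: "0 \<le> B" using B r_le_1 by force
  have \<rho>: "0 < \<rho>" using B0 B by linarith
  have "real (Suc m) * delta_seq n r \<gamma> (Suc m)
        = (\<Sum>l<Suc m. \<Sum>j\<le>n. \<gamma> j * (1 - r j) ^ Suc l * delta_seq n r \<gamma> (m - l))"
    by simp
  also have "\<dots> \<le> (\<Sum>l<Suc m. \<Sum>j\<le>n. \<gamma> j * (K * \<rho> ^ Suc m * (B / \<rho>) ^ Suc l))"
  proof (intro sum_mono)
    fix l j assume l: "l \<in> {..<Suc m}" and j: "j \<in> {..n}"
    have "(1 - r j) ^ Suc l * delta_seq n r \<gamma> (m - l) \<le> B ^ Suc l * (K * \<rho> ^ (m - l))"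
      using B B0 r_le_1 j IH delta_seq_nonneg K \<rho>
      by (intro mult_mono power_mono) auto
    also have "\<dots> = K * \<rho> ^ Suc m * (B / \<rho>) ^ Suc l"
    proof -
      have "\<rho> ^ Suc m = \<rho> ^ (m - l) * \<rho> ^ Suc l" using l by (simp flip: power_add)
      then show ?thesis using \<rho> by (simp add: power_divide)
    qed
    finally show "\<gamma> j * (1 - r j) ^ Suc l * delta_seq n r \<gamma> (m - l)
        \<le> \<gamma> j * (K * \<rho> ^ Suc m * (B / \<rho>) ^ Suc l)"
      using \<gamma>_pos j by (simp add: mult.assoc mult_left_mono)
  qed
  also have "\<dots> = (\<Sum>l<Suc m. (\<Sum>j\<le>n. \<gamma> j) * (K * \<rho> ^ Suc m * (B / \<rho>) ^ Suc l))"
    by (simp only: sum_distrib_right)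
  also have "\<dots> = K * \<rho> ^ Suc m * (\<Sum>j\<le>n. \<gamma> j) * (\<Sum>l<Suc m. (B / \<rho>) ^ Suc l)"
    by (simp only: sum_distrib_left mult_ac)
  also have "\<dots> \<le> K * \<rho> ^ Suc m * (\<Sum>j\<le>n. \<gamma> j) * ((B / \<rho>) / (1 - B / \<rho>))"
    using B B0 \<rho> K \<gamma>_pos
    by (intro mult_left_mono sum_power_Suc_le mult_nonneg_nonneg sum_nonneg) (auto intro: less_imp_le)
  also have "(B / \<rho>) / (1 - B / \<rho>) = B / (\<rho> - B)" using \<rho> by (simp add: field_simps)
  finally show ?thesis by (simp add: mult_ac)
qed

lemma delta_seq_le_geometric:
  assumes "\<forall>j\<le>n. 1 - r j < \<rho>"
  shows "\<exists>K. \<forall>k. delta_seq n r \<gamma> k \<le> K * \<rho> ^ k"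
proof -
  define B where "B = Max ((\<lambda>j. 1 - r j) ` {..n})"
  have B: "\<forall>j\<le>n. 1 - r j \<le> B" "B < \<rho>" using assms by (auto simp: B_def)
  have \<rho>: "0 < \<rho>" using assms r_le_1 by force
  obtain k0 :: nat where k0: "(\<Sum>j\<le>n. \<gamma> j) * B / (\<rho> - B) \<le> real k0"
    using real_arch_simple by blast
  define K where "K = Max ((\<lambda>k. delta_seq n r \<gamma> k / \<rho> ^ k) ` {..k0})"
  have K_bound: "delta_seq n r \<gamma> k \<le> K * \<rho> ^ k" if "k \<le> k0" for k
  proof -
    have "delta_seq n r \<gamma> k / \<rho> ^ k \<le> K" unfolding K_def using that by (intro Max_ge) auto
    then show ?thesis using \<rho> by (simp add: divide_le_eq)
  qed
  have K: "0 \<le> K" using K_bound[of 0] by simp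
  have "delta_seq n r \<gamma> k \<le> K * \<rho> ^ k" for k
  proof (induction k rule: less_induct)
    case (less k)
    show ?case
    proof (cases "k \<le> k0")
      case False
      then obtain m where m: "k = Suc m" "k0 \<le> m" by (cases k) auto
      have "real (Suc m) * delta_seq n r \<gamma> (Suc m) \<le> K * \<rho> ^ Suc m * ((\<Sum>j\<le>n. \<gamma> j) * B / (\<rho> - B))"
        using less m by (intro delta_seq_Suc_le[OF B K]) auto
      also have "\<dots> \<le> K * \<rho> ^ Suc m * real (Suc m)"
        using k0 m K \<rho> by (intro mult_left_mono) auto
      finally have "real (Suc m) * delta_seq n r \<gamma> (Suc m) \<le> real (Suc m) * (K * \<rho> ^ Suc m)"
        by (simp only: mult_ac)
      then show ?thesis unfolding m(1) by (rule mult_left_le_imp_le) simp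
    qed (rule K_bound)
  qed
  then show ?thesis by blast
qed

lemma delta_seq_powser_summable:
  assumes "\<forall>j\<le>n. 1 - r j < \<rho>" "\<rho> * \<bar>x\<bar> < 1"
  shows "summable (\<lambda>k. delta_seq n r \<gamma> k * x ^ k)"
proof -
  obtain K where K: "\<And>k. delta_seq n r \<gamma> k \<le> K * \<rho> ^ k"
    using delta_seq_le_geometric[OF assms(1)] by blast
  have \<rho>: "0 < \<rho>" using assms(1) r_le_1 by force
  have "summable (\<lambda>k. K * (\<rho> * \<bar>x\<bar>) ^ k)"
    using assms(2) \<rho> by (intro summable_mult summable_geometric) auto
  moreover have "norm (delta_seq n r \<gamma> k * x ^ k) \<le> K * (\<rho> * \<bar>x\<bar>) ^ k" for k
  proof -
    have "norm (delta_seq n r \<gamma> k * x ^ k) = delta_seq n r \<gamma> k * \<bar>x\<bar> ^ k"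
      using delta_seq_nonneg[of k] by (simp add: abs_mult power_abs)
    also have "\<dots> \<le> K * \<rho> ^ k * \<bar>x\<bar> ^ k" using K[of k] by (intro mult_right_mono) auto
    finally show ?thesis by (simp add: power_mult_distrib mult_ac)
  qed
  ultimately show ?thesis by (rule summable_comparison_test'[where N = 0])
qed

lemma delta_seq_diffs:
  "diffs (delta_seq n r \<gamma>) k
     = (\<Sum>l\<le>k. (\<Sum>j\<le>n. \<gamma> j * (1 - r j) ^ Suc l) * delta_seq n r \<gamma> (k - l))"
  by (simp add: diffs_def lessThan_Suc_atMost sum_distrib_right)

lemma delta_seq_weights_sums:
  assumes "\<forall>j\<le>n. 1 - r j < \<rho>" "\<rho> * \<bar>x\<bar> < 1"
  shows "(\<lambda>l. (\<Sum>j\<le>n. \<gamma> j * (1 - r j) ^ Suc l) * x ^ l)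
           sums (\<Sum>j\<le>n. \<gamma> j * (1 - r j) / (1 - (1 - r j) * x))"
proof -
  have "\<bar>(1 - r j) * x\<bar> < 1" if "j \<le> n" for j
  proof -
    have "\<bar>(1 - r j) * x\<bar> = (1 - r j) * \<bar>x\<bar>" using r_le_1 that by (simp add: abs_mult)
    also have "\<dots> \<le> \<rho> * \<bar>x\<bar>" using assms that by (intro mult_right_mono) auto
    finally show ?thesis using assms by linarith
  qed
  then have "(\<lambda>l. \<gamma> j * (1 - r j) * ((1 - r j) * x) ^ l) sums (\<gamma> j * (1 - r j) / (1 - (1 - r j) * x))"
    if "j \<in> {..n}" for j
    using sums_mult[OF geometric_sums, of "(1 - r j) * x" "\<gamma> j * (1 - r j)"] that by simp
  then have "(\<lambda>l. \<Sum>j\<le>n. \<gamma> j * (1 - r j) * ((1 - r j) * x) ^ l)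
               sums (\<Sum>j\<le>n. \<gamma> j * (1 - r j) / (1 - (1 - r j) * x))"
    by (rule sums_sum)
  then show ?thesis
    by (simp add: sum_distrib_left sum_distrib_right power_mult_distrib mult_ac)
qed

text \<open>The generating function S of the sequence satisfies S' = S h, where h is the logarithmic
  derivative of the product of the powers (1 - (1 - r j) x) powr - \<gamma> j: this is what the
  recursion defining the sequence encodes, via a Cauchy product.\<close>
lemma delta_seq_powser_deriv:
  assumes \<rho>: "\<forall>j\<le>n. 1 - r j < \<rho>" and x: "\<rho> * \<bar>x\<bar> < 1"
  shows "DERIV (\<lambda>x. \<Sum>k. delta_seq n r \<gamma> k * x ^ k) x :>
           (\<Sum>k. delta_seq n r \<gamma> k * x ^ k) * (\<Sum>j\<le>n. \<gamma> j * (1 - r j) / (1 - (1 - r j) * x))"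
proof -
  define d where "d = delta_seq n r \<gamma>"
  define a where "a l = (\<Sum>j\<le>n. \<gamma> j * (1 - r j) ^ Suc l)" for l
  have \<rho>0: "0 < \<rho>" using \<rho> r_le_1 by force
  define x' where "x' = (\<bar>x\<bar> + 1 / \<rho>) / 2"
  have x': "\<bar>x\<bar> < \<bar>x'\<bar>" "\<rho> * \<bar>x'\<bar> < 1"
    using x \<rho>0 by (auto simp: x'_def field_simps)
  have deriv: "DERIV (\<lambda>x. \<Sum>k. d k * x ^ k) x :> (\<Sum>k. diffs d k * x ^ k)"
    unfolding d_def
    by (rule termdiffs_strong[OF delta_seq_powser_summable[OF \<rho> x'(2)]]) (use x'(1) in simp)
  have a_nonneg: "0 \<le> a l" for l
    unfolding a_def using \<gamma>_pos r_le_1 by (intro sum_nonneg mult_nonneg_nonneg) (auto intro: less_imp_le)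
  have "summable (\<lambda>l. a l * \<bar>x\<bar> ^ l)"
    using delta_seq_weights_sums[OF \<rho>, of "\<bar>x\<bar>"] x unfolding a_def by (auto intro: sums_summable)
  then have a_abs: "summable (\<lambda>l. norm (a l * x ^ l))"
    using a_nonneg by (simp add: abs_mult power_abs)
  have "summable (\<lambda>k. d k * \<bar>x\<bar> ^ k)"
    unfolding d_def using x by (intro delta_seq_powser_summable[OF \<rho>]) auto
  then have d_abs: "summable (\<lambda>k. norm (d k * x ^ k))"
    using delta_seq_nonneg by (simp add: d_def abs_mult power_abs)
  have "(\<Sum>l. a l * x ^ l) * (\<Sum>k. d k * x ^ k)
          = (\<Sum>k. \<Sum>l\<le>k. a l * x ^ l * (d (k - l) * x ^ (k - l)))"
    by (rule Cauchy_product[OF a_abs d_abs])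
  also have "\<dots> = (\<Sum>k. diffs d k * x ^ k)"
  proof (intro suminf_cong)
    fix k
    have "a l * x ^ l * (d (k - l) * x ^ (k - l)) = a l * d (k - l) * x ^ k" if "l \<le> k" for l
      using that by (simp add: mult_ac flip: power_add)
    then show "(\<Sum>l\<le>k. a l * x ^ l * (d (k - l) * x ^ (k - l))) = diffs d k * x ^ k"
      by (simp add: d_def a_def delta_seq_diffs sum_distrib_right)
  qed
  finally show ?thesis
    using deriv sums_unique[OF delta_seq_weights_sums[OF \<rho> x]]
    by (simp add: d_def a_def mult.commute)
qed

lemma delta_seq_sums:
  assumes t: "0 \<le> t" "t \<le> 1"
  shows "(\<lambda>k. delta_seq n r \<gamma> k * t ^ k) sums (\<Prod>j\<le>n. (1 - (1 - r j) * t) powr - \<gamma> j)"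
proof -
  define S where "S x = (\<Sum>k. delta_seq n r \<gamma> k * x ^ k)" for x
  define L where "L x = (\<Sum>j\<le>n. \<gamma> j * ln (1 - (1 - r j) * x))" for x
  define B where "B = Max ((\<lambda>j. 1 - r j) ` {..n})"
  define \<rho> where "\<rho> = (1 + B) / 2"
  have B: "B < 1" unfolding B_def using r_pos by (subst Max_less_iff) auto
  have "1 - r j \<le> B" if "j \<le> n" for j
    unfolding B_def using that by (intro Max_ge) auto
  then have \<rho>: "\<forall>j\<le>n. 1 - r j < \<rho>" "\<rho> < 1"
    using B by (fastforce simp: \<rho>_def)+
  have \<rho>0: "0 < \<rho>" using \<rho> r_le_1 by force
  define R where "R = 1 / \<rho>"
  have R: "\<rho> * \<bar>x\<bar> < 1" if "\<bar>x\<bar> < R" for x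
    using that \<rho>0 by (simp add: R_def field_simps)
  have pos: "0 < 1 - (1 - r j) * x" if "j \<le> n" "\<bar>x\<bar> < R" for j x
  proof -
    have "\<bar>(1 - r j) * x\<bar> = (1 - r j) * \<bar>x\<bar>" using r_le_1 that by (simp add: abs_mult)
    also have "\<dots> \<le> \<rho> * \<bar>x\<bar>" using \<rho> that by (intro mult_right_mono) auto
    finally show ?thesis using R[OF that(2)] by (simp add: abs_less_iff)
  qed
  have "DERIV (\<lambda>x. S x * exp (L x)) x :> 0" if "\<bar>x\<bar> < R" for x
  proof -
    define h where "h = (\<Sum>j\<le>n. \<gamma> j * (1 - r j) / (1 - (1 - r j) * x))"
    have "DERIV L x :> (\<Sum>j\<le>n. \<gamma> j * (- (1 - r j) / (1 - (1 - r j) * x)))"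
      unfolding L_def using pos[OF _ that]
      by (auto intro!: derivative_eq_intros sum.cong simp: mult.commute)
    moreover have "(\<Sum>j\<le>n. \<gamma> j * (- (1 - r j) / (1 - (1 - r j) * x))) = - h"
      unfolding h_def sum_negf[symmetric]
      by (intro sum.cong refl) (simp only: minus_divide_left[symmetric] mult_minus_right times_divide_eq_right)
    ultimately have "DERIV L x :> - h" by simp
    from DERIV_mult[OF delta_seq_powser_deriv[OF \<rho>(1) R[OF that]] DERIV_chain'[OF this DERIV_exp]]
    show ?thesis unfolding S_def h_def[symmetric] by (rule DERIV_cong) (simp add: algebra_simps)
  qed
  moreover have "1 < R" using \<rho> \<rho>0 by (simp add: R_def)
  ultimately have "S t * exp (L t) = S 0 * exp (L 0)"
    using t by (intro DERIV_isconst3[of "-R" R]) (auto simp: abs_less_iff)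
  moreover have "S 0 = 1" using powser_zero[of "delta_seq n r \<gamma>"] by (simp add: S_def)
  ultimately have "S t = exp (- L t)"
    by (simp add: L_def exp_minus field_simps)
  also have "\<dots> = (\<Prod>j\<le>n. exp (- \<gamma> j * ln (1 - (1 - r j) * t)))"
    unfolding L_def by (simp add: exp_sum flip: sum_negf)
  also have "\<dots> = (\<Prod>j\<le>n. (1 - (1 - r j) * t) powr - \<gamma> j)"
  proof (intro prod.cong refl)
    fix j assume "j \<in> {..n}"
    then have "0 < 1 - (1 - r j) * t" using pos t \<open>1 < R\<close> by simp
    then show "exp (- \<gamma> j * ln (1 - (1 - r j) * t)) = (1 - (1 - r j) * t) powr - \<gamma> j"
      by (simp add: powr_def)
  qed
  finally show ?thesis
    using delta_seq_powser_summable[OF \<rho>(1) R, of t] t \<open>1 < R\<close>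
    unfolding S_def by (metis abs_of_nonneg order.strict_trans1 summable_sums)
qed

end

section \<open>The survival function of X_- as a Pareto mixture\<close>

text \<open>The survival function of the minimum of independent Pa(II)(\<alpha> j, \<gamma> j) variables;
  by hypothesis it is also that of X_-.\<close>
definition pareto_prod_surv :: "nat \<Rightarrow> (nat \<Rightarrow> real) \<Rightarrow> (nat \<Rightarrow> real) \<Rightarrow> real \<Rightarrow> real" where
  "pareto_prod_surv n \<alpha> \<gamma> x = (\<Prod>j\<le>n. (1 + x / \<alpha> j) powr - \<gamma> j)"

text \<open>Writing 1 + x / \<alpha> j = W (1 - (1 - r j) / W) / r j with W = 1 + x / a and r j = \<alpha> j / a
  reduces the mixture representation to the generating function of delta_seq at 1 / W.\<close>
lemma pareto_prod_surv_sums: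
  assumes \<alpha>: "\<forall>j\<le>n. 0 < \<alpha> j" and \<gamma>: "\<forall>j\<le>n. 0 < \<gamma> j" and x: "0 \<le> x"
    and \<alpha>_le: "\<forall>j\<le>n. \<alpha> j \<le> a"
  shows "(\<lambda>k. (\<Prod>j\<le>n. (\<alpha> j / a) powr \<gamma> j) * delta_seq n (\<lambda>j. \<alpha> j / a) \<gamma> k
            * (1 + x / a) powr - ((\<Sum>j\<le>n. \<gamma> j) + real k))
         sums pareto_prod_surv n \<alpha> \<gamma> x"
proof -
  define r where "r = (\<lambda>j. \<alpha> j / a)"
  define W where "W = 1 + x / a"
  define cp where "cp = (\<Prod>j\<le>n. r j powr \<gamma> j)"
  have a_pos: "0 < a" using \<alpha> \<alpha>_le by force
  have r: "0 < r j" "r j \<le> 1" if "j \<le> n" for j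
    using \<alpha> \<alpha>_le a_pos that by (auto simp: r_def)
  have W: "1 \<le> W" using x a_pos by (simp add: W_def)
  have factor: "(1 + x / \<alpha> j) powr - \<gamma> j
      = W powr - \<gamma> j * r j powr \<gamma> j * (1 - (1 - r j) * (1 / W)) powr - \<gamma> j" if "j \<le> n" for j
  proof -
    have "0 < \<alpha> j" using \<alpha> that by auto
    have "W * (1 - (1 - r j) * (1 / W)) = W - (1 - r j)" using W by (simp add: field_simps)
    also have "\<dots> = x / a + r j" by (simp add: W_def)
    finally have "W * (1 - (1 - r j) * (1 / W)) = x / a + r j" .
    moreover have "(x / a + r j) / r j = 1 + x / \<alpha> j"
      using \<open>0 < \<alpha> j\<close> a_pos by (simp add: r_def field_simps)
    ultimately have "1 + x / \<alpha> j = W * (1 - (1 - r j) * (1 / W)) / r j" by simp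
    moreover have "0 < 1 - (1 - r j) * (1 / W)"
      using W r[OF that] by (simp add: field_simps)
    ultimately show ?thesis
      using W r[OF that] by (simp add: powr_mult powr_divide powr_minus_divide)
  qed
  have surv: "pareto_prod_surv n \<alpha> \<gamma> x
      = W powr - (\<Sum>j\<le>n. \<gamma> j) * cp * (\<Prod>j\<le>n. (1 - (1 - r j) * (1 / W)) powr - \<gamma> j)"
    using W unfolding pareto_prod_surv_def cp_def
    by (simp add: factor prod.distrib powr_sum flip: sum_negf)
  have "(\<lambda>k. delta_seq n r \<gamma> k * (1 / W) ^ k)
      sums (\<Prod>j\<le>n. (1 - (1 - r j) * (1 / W)) powr - \<gamma> j)"
    using W r \<gamma> by (intro delta_seq_sums) auto
  from sums_mult[OF this, of "W powr - (\<Sum>j\<le>n. \<gamma> j) * cp"]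
  have "(\<lambda>k. cp * delta_seq n r \<gamma> k * W powr - ((\<Sum>j\<le>n. \<gamma> j) + real k))
          sums pareto_prod_surv n \<alpha> \<gamma> x"
    using W by (simp add: surv powr_diff powr_realpow power_one_over mult_ac)
  then show ?thesis by (simp only: r_def W_def cp_def)
qed

lemma pareto_prod_surv_0 [simp]: "pareto_prod_surv n \<alpha> \<gamma> 0 = 1"
  by (simp add: pareto_prod_surv_def)

context
  fixes n :: nat and \<alpha> \<gamma> :: "nat \<Rightarrow> real"
  assumes \<alpha>_pos: "\<forall>j\<le>n. 0 < \<alpha> j" and \<gamma>_pos: "\<forall>j\<le>n. 0 < \<gamma> j"
begin

lemma pareto_prod_surv_strict_antimono:
  assumes "0 \<le> x" "x < y"
  shows "pareto_prod_surv n \<alpha> \<gamma> y < pareto_prod_surv n \<alpha> \<gamma> x"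
proof -
  have less: "(1 + y / \<alpha> j) powr - \<gamma> j < (1 + x / \<alpha> j) powr - \<gamma> j"
    and pos: "0 < (1 + x / \<alpha> j) powr - \<gamma> j" if "j \<le> n" for j
  proof -
    have j: "0 < \<alpha> j" "0 < \<gamma> j" using \<alpha>_pos \<gamma>_pos that by auto
    have "0 < 1 + x / \<alpha> j" using j assms by (simp add: add_pos_nonneg)
    moreover have "1 + x / \<alpha> j < 1 + y / \<alpha> j" using j assms by (simp add: divide_strict_right_mono)
    ultimately show "(1 + y / \<alpha> j) powr - \<gamma> j < (1 + x / \<alpha> j) powr - \<gamma> j"
      and "0 < (1 + x / \<alpha> j) powr - \<gamma> j"
      using j by (auto intro: powr_less_mono2_neg)
  qed
  show ?thesis
    unfolding pareto_prod_surv_def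
    by (rule prod_mono_strict[of 0]) (auto intro: less pos less_imp_le simp del: powr_gt_zero)
qed

lemma continuous_on_pareto_prod_surv: "continuous_on {0..} (pareto_prod_surv n \<alpha> \<gamma>)"
proof -
  have "\<alpha> j \<noteq> 0 \<and> 1 + x / \<alpha> j \<noteq> 0" if "j \<in> {..n}" "x \<in> {0..}" for j x
  proof -
    have "0 < \<alpha> j" using \<alpha>_pos that by simp
    then show ?thesis using that by (simp add: field_simps)
  qed
  then show ?thesis
    unfolding pareto_prod_surv_def[abs_def] by (intro continuous_intros) auto
qed

lemma pareto_prod_surv_tendsto_0: "(pareto_prod_surv n \<alpha> \<gamma> \<longlongrightarrow> 0) at_top"
proof -
  have "((\<lambda>x. \<Prod>j\<le>n. (1 + x / \<alpha> j) powr - \<gamma> j) \<longlongrightarrow> (\<Prod>j\<le>n. 0)) at_top"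
  proof (intro tendsto_prod)
    fix j assume "j \<in> {..n}"
    then have "0 < \<alpha> j" "0 < \<gamma> j" using \<alpha>_pos \<gamma>_pos by auto
    then show "((\<lambda>x. (1 + x / \<alpha> j) powr - \<gamma> j) \<longlongrightarrow> 0) at_top" by real_asymp
  qed
  then show ?thesis by (simp add: pareto_prod_surv_def[abs_def])
qed

lemma pareto_prod_surv_attains:
  assumes "0 < y" "y \<le> 1"
  obtains x where "0 \<le> x" "pareto_prod_surv n \<alpha> \<gamma> x = y"
proof -
  have "\<forall>\<^sub>F x in at_top. 0 \<le> x \<and> pareto_prod_surv n \<alpha> \<gamma> x < y"
    using eventually_ge_at_top order_tendstoD(2)[OF pareto_prod_surv_tendsto_0 assms(1)]
    by (rule eventually_conj)
  then obtain b where b: "0 \<le> b" "pareto_prod_surv n \<alpha> \<gamma> b \<le> y"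
    by (auto simp: eventually_at_top_linorder less_imp_le)
  then show ?thesis
    using IVT2'[of "pareto_prod_surv n \<alpha> \<gamma>" b y 0] assms
      continuous_on_subset[OF continuous_on_pareto_prod_surv, of "{0..b}"] that
    by auto
qed

end

section \<open>Tail expectations of Pareto mixtures\<close>

lemma nn_integral_pareto_tail:
  assumes a: "0 < a" and s: "1 < s" and v: "0 \<le> v"
  shows "(\<integral>\<^sup>+x. ennreal ((1 + x / a) powr - s) * indicator {v..} x \<partial>lborel)
       = ennreal (a / (s - 1) * (1 + v / a) powr - (s - 1))"
proof -
  define F where "F x = - (a / (s - 1)) * (1 + x / a) powr (1 - s)" for x
  have "DERIV F x :> (1 + x / a) powr - s" if "v \<le> x" for x
  proof -
    have "0 < 1 + x / a" using a v that by (simp add: add_pos_nonneg)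
    moreover have "DERIV (\<lambda>x. 1 + x / a) x :> 1 / a" using a by (auto intro!: derivative_eq_intros)
    ultimately have "DERIV F x :> - (a / (s - 1)) * ((1 - s) * (1 + x / a) powr (1 - s - 1) * (1 / a))"
      unfolding F_def by (intro DERIV_cmult) (use DERIV_fun_powr[of _ "1 / a" x "1 - s"] in simp)
    moreover have "- (a / (s - 1)) * ((1 - s) * (1 + x / a) powr (1 - s - 1) * (1 / a)) = (1 + x / a) powr - s"
      using a s by (simp add: field_simps)
    ultimately show ?thesis by simp
  qed
  moreover have "(F \<longlongrightarrow> 0) at_top" unfolding F_def using a s by real_asymp
  ultimately have "(\<integral>\<^sup>+x. ennreal ((1 + x / a) powr - s) * indicator {v..} x \<partial>lborel) = 0 - F v"
    by (intro nn_integral_FTC_atLeast) auto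
  then show ?thesis by (simp add: F_def)
qed

lemma nn_integral_pareto_tail_infinite:
  assumes a: "0 < a" and s: "s \<le> 1" and v: "0 \<le> v"
  shows "(\<integral>\<^sup>+x. ennreal ((1 + x / a) powr - s) * indicator {v..} x \<partial>lborel) = \<infinity>"
    (is "?I = _")
proof (rule ccontr)
  define F where "F x = a * ln (1 + x / a)" for x
  have I_ge: "ennreal (F b - F v) \<le> ?I" if "v \<le> b" for b
  proof -
    have "ennreal (F b - F v) = (\<integral>\<^sup>+x. ennreal (1 / (1 + x / a)) * indicator {v..b} x \<partial>lborel)"
    proof (rule nn_integral_FTC_Icc[symmetric])
      fix x assume "x \<in> {v..b}"
      then have "0 < 1 + x / a" using a v by (simp add: add_pos_nonneg)
      then show "DERIV F x :> 1 / (1 + x / a)" "0 \<le> 1 / (1 + x / a)"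
        unfolding F_def using a by (auto intro!: derivative_eq_intros simp: field_simps)
    qed (use that in auto)
    also have "\<dots> \<le> (\<integral>\<^sup>+x. ennreal ((1 + x / a) powr - s) * indicator {v..} x \<partial>lborel)"
    proof (intro nn_integral_mono)
      fix x
      show "ennreal (1 / (1 + x / a)) * indicator {v..b} x \<le> ennreal ((1 + x / a) powr - s) * indicator {v..} x"
      proof (cases "x \<in> {v..b}")
        case True
        then have "1 \<le> 1 + x / a" using a v by simp
        then have "1 / (1 + x / a) = (1 + x / a) powr - 1" by (simp add: powr_minus_divide)
        also have "\<dots> \<le> (1 + x / a) powr - s" using \<open>1 \<le> 1 + x / a\<close> s by (intro powr_mono) auto
        finally have "1 / (1 + x / a) \<le> (1 + x / a) powr - s" .
        then show ?thesis using True by (simp add: ennreal_leI)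
      qed simp
    qed
    finally show ?thesis .
  qed
  assume "?I \<noteq> \<infinity>"
  then obtain c where c: "?I = ennreal c" "0 \<le> c" by (cases ?I) auto
  have "filterlim (\<lambda>b. F b - F v) at_top at_top" unfolding F_def using a by real_asymp
  then have "\<forall>\<^sub>F b in at_top. c < F b - F v \<and> v \<le> b"
    by (intro eventually_conj) (auto simp: filterlim_at_top_dense)
  then obtain b where b: "c < F b - F v" "v \<le> b" by (auto simp: eventually_at_top_linorder)
  have "ennreal (F b - F v) \<le> ennreal c" using I_ge[OF b(2)] c(1) by simp
  then show False using b c(2) by (simp add: ennreal_le_iff)
qed

lemma nn_integral_eq_integral_emeasure_gt:
  assumes "sigma_finite_measure M" and [measurable]: "Z \<in> borel_measurable M"
    and nonneg: "\<And>\<omega>. \<omega> \<in> space M \<Longrightarrow> 0 \<le> Z \<omega>"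
  shows "(\<integral>\<^sup>+\<omega>. ennreal (Z \<omega>) \<partial>M)
       = (\<integral>\<^sup>+x. indicator {0..} x * emeasure M {\<omega>\<in>space M. x < Z \<omega>} \<partial>lborel)"
proof -
  interpret pair_sigma_finite lborel M
    using assms(1) by (intro pair_sigma_finite.intro lborel.sigma_finite_measure_axioms)
  have "(\<integral>\<^sup>+\<omega>. ennreal (Z \<omega>) \<partial>M)
      = (\<integral>\<^sup>+\<omega>. (\<integral>\<^sup>+x. indicator {0..} x * indicator {\<omega>\<in>space M. x < Z \<omega>} \<omega> \<partial>lborel) \<partial>M)"
  proof (intro nn_integral_cong)
    fix \<omega> assume \<omega>: "\<omega> \<in> space M"
    then have "(\<integral>\<^sup>+x. indicator {0..} x * indicator {\<omega>\<in>space M. x < Z \<omega>} \<omega> \<partial>lborel)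
        = (\<integral>\<^sup>+x. indicator {0..<Z \<omega>} x \<partial>lborel)"
      by (intro nn_integral_cong) (auto split: split_indicator)
    then show "ennreal (Z \<omega>) = (\<integral>\<^sup>+x. indicator {0..} x * indicator {\<omega>\<in>space M. x < Z \<omega>} \<omega> \<partial>lborel)"
      using nonneg[OF \<omega>] by simp
  qed
  also have "\<dots> = (\<integral>\<^sup>+x. (\<integral>\<^sup>+\<omega>. indicator {0..} x * indicator {\<omega>\<in>space M. x < Z \<omega>} \<omega> \<partial>M) \<partial>lborel)"
    by (rule Fubini'[where f = "\<lambda>x \<omega>. indicator {0..} x * indicator {\<omega>\<in>space M. x < Z \<omega>} \<omega>"])
      measurable
  also have "\<dots> = (\<integral>\<^sup>+x. indicator {0..} x * emeasure M {\<omega>\<in>space M. x < Z \<omega>} \<partial>lborel)"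
    by (intro nn_integral_cong) (simp add: nn_integral_cmult_indicator)
  finally show ?thesis .
qed

lemma nn_integral_indicator_gt:
  assumes "sigma_finite_measure M" and [measurable]: "Y \<in> borel_measurable M" and v: "0 \<le> v"
  shows "(\<integral>\<^sup>+\<omega>. ennreal (indicator {\<omega>\<in>space M. v < Y \<omega>} \<omega> * Y \<omega>) \<partial>M)
       = ennreal v * emeasure M {\<omega>\<in>space M. v < Y \<omega>}
         + (\<integral>\<^sup>+x. emeasure M {\<omega>\<in>space M. x < Y \<omega>} * indicator {v..} x \<partial>lborel)"
proof -
  interpret sigma_finite_measure M by (rule assms(1))
  have "(\<lambda>x. \<integral>\<^sup>+\<omega>. indicator {\<omega>\<in>space M. x < Y \<omega>} \<omega> \<partial>M) \<in> borel_measurable borel"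
    by measurable
  then have [measurable]: "(\<lambda>x. emeasure M {\<omega>\<in>space M. x < Y \<omega>}) \<in> borel_measurable borel"
    by simp
  let ?Z = "\<lambda>\<omega>. indicator {\<omega>\<in>space M. v < Y \<omega>} \<omega> * Y \<omega>"
  have "(\<integral>\<^sup>+\<omega>. ennreal (?Z \<omega>) \<partial>M)
      = (\<integral>\<^sup>+x. indicator {0..} x * emeasure M {\<omega>\<in>space M. x < ?Z \<omega>} \<partial>lborel)"
    using assms v by (intro nn_integral_eq_integral_emeasure_gt) (auto split: split_indicator)
  also have "\<dots> = (\<integral>\<^sup>+x. emeasure M {\<omega>\<in>space M. v < Y \<omega>} * indicator {0..<v} x
                       + emeasure M {\<omega>\<in>space M. x < Y \<omega>} * indicator {v..} x \<partial>lborel)"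
  proof (intro nn_integral_cong)
    fix x :: real
    have "{\<omega>\<in>space M. x < ?Z \<omega>} = {\<omega>\<in>space M. max x v < Y \<omega>}" if "0 \<le> x"
      using that by (auto split: split_indicator)
    then show "indicator {0..} x * emeasure M {\<omega>\<in>space M. x < ?Z \<omega>}
        = emeasure M {\<omega>\<in>space M. v < Y \<omega>} * indicator {0..<v} x
          + emeasure M {\<omega>\<in>space M. x < Y \<omega>} * indicator {v..} x"
      using v by (cases "0 \<le> x") (auto simp: max_def split: split_indicator)
  qed
  also have "\<dots> = ennreal v * emeasure M {\<omega>\<in>space M. v < Y \<omega>}
                   + (\<integral>\<^sup>+x. emeasure M {\<omega>\<in>space M. x < Y \<omega>} * indicator {v..} x \<partial>lborel)"
    using v by (subst nn_integral_add) (auto simp: nn_integral_cmult_indicator mult.commute[of _ "ennreal v"])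
  finally show ?thesis .
qed

lemma nn_integral_pareto_mixture_tail:
  assumes sums: "\<And>x. v \<le> x \<Longrightarrow> (\<lambda>k. p k * (1 + x / a) powr - (g + real k)) sums F x"
    and p: "\<And>k. 0 \<le> p k"
  shows "(\<integral>\<^sup>+x. ennreal (F x) * indicator {v..} x \<partial>lborel)
       = (\<Sum>k. ennreal (p k) * (\<integral>\<^sup>+x. ennreal ((1 + x / a) powr - (g + real k)) * indicator {v..} x \<partial>lborel))"
proof -
  have "(\<integral>\<^sup>+x. ennreal (F x) * indicator {v..} x \<partial>lborel)
      = (\<integral>\<^sup>+x. (\<Sum>k. ennreal (p k) * (ennreal ((1 + x / a) powr - (g + real k)) * indicator {v..} x)) \<partial>lborel)"
  proof (intro nn_integral_cong)
    fix x :: real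
    show "ennreal (F x) * indicator {v..} x
        = (\<Sum>k. ennreal (p k) * (ennreal ((1 + x / a) powr - (g + real k)) * indicator {v..} x))"
    proof (cases "v \<le> x")
      case True
      then have "(\<Sum>k. ennreal (p k * (1 + x / a) powr - (g + real k))) = ennreal (F x)"
        using p by (intro suminf_ennreal_eq sums) auto
      then show ?thesis using True p by (simp add: ennreal_mult)
    qed simp
  qed
  also have "\<dots> = (\<Sum>k. ennreal (p k) * (\<integral>\<^sup>+x. ennreal ((1 + x / a) powr - (g + real k)) * indicator {v..} x \<partial>lborel))"
    by (simp add: nn_integral_suminf nn_integral_cmult)
  finally show ?thesis .
qed

lemma integrable_of_set_integrable_gt:
  fixes Y :: "'a \<Rightarrow> real"
  assumes "finite_measure M" and [measurable]: "Y \<in> borel_measurable M"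
    and nonneg: "AE \<omega> in M. 0 \<le> Y \<omega>"
    and integ: "set_integrable M {\<omega>\<in>space M. v < Y \<omega>} Y"
  shows "integrable M Y"
proof -
  interpret finite_measure M by (rule assms(1))
  let ?f = "\<lambda>\<omega>. indicator {\<omega>\<in>space M. v < Y \<omega>} \<omega> * Y \<omega> + \<bar>v\<bar>"
  have f: "integrable M ?f"
    using integ unfolding set_integrable_def by auto
  have bound: "AE \<omega> in M. norm (Y \<omega>) \<le> norm (?f \<omega>)"
    using nonneg AE_space by eventually_elim (auto split: split_indicator)
  show ?thesis by (rule Bochner_Integration.integrable_bound[OF f _ bound]) measurable
qed

lemma (in prob_space) integral_pos_of_AE_pos:
  fixes Y :: "'a \<Rightarrow> real"
  assumes "integrable M Y" "AE \<omega> in M. 0 < Y \<omega>"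
  shows "0 < integral\<^sup>L M Y"
proof -
  have nonneg: "AE \<omega> in M. 0 \<le> Y \<omega>" using assms(2) by eventually_elim simp
  have "integral\<^sup>L M Y \<noteq> 0"
  proof
    assume "integral\<^sup>L M Y = 0"
    then have "AE \<omega> in M. Y \<omega> = 0"
      using integral_nonneg_eq_0_iff_AE[OF assms(1) nonneg] by simp
    with assms(2) have "AE \<omega> in M. False" by eventually_elim auto
    then show False by simp
  qed
  moreover have "0 \<le> integral\<^sup>L M Y" using nonneg by (rule integral_nonneg_AE)
  ultimately show ?thesis by simp
qed

lemma nn_integral_indicator_gt_pareto_mixture:
  fixes Y :: "'a \<Rightarrow> real"
  assumes "prob_space M" and Y[measurable]: "Y \<in> borel_measurable M"
    and surv: "\<And>x. 0 \<le> x \<Longrightarrow>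
         (\<lambda>k. p k * (1 + x / a) powr - (g + real k)) sums measure M {\<omega>\<in>space M. x < Y \<omega>}"
    and p: "\<And>k. 0 \<le> p k" and v: "0 \<le> v"
  shows "(\<integral>\<^sup>+\<omega>. ennreal (indicator {\<omega>\<in>space M. v < Y \<omega>} \<omega> * Y \<omega>) \<partial>M)
       = ennreal (v * measure M {\<omega>\<in>space M. v < Y \<omega>})
         + (\<Sum>k. ennreal (p k) * (\<integral>\<^sup>+x. ennreal ((1 + x / a) powr - (g + real k)) * indicator {v..} x \<partial>lborel))"
proof -
  interpret prob_space M by (rule assms(1))
  have "(\<integral>\<^sup>+x. ennreal (measure M {\<omega>\<in>space M. x < Y \<omega>}) * indicator {v..} x \<partial>lborel)
      = (\<Sum>k. ennreal (p k) * (\<integral>\<^sup>+x. ennreal ((1 + x / a) powr - (g + real k)) * indicator {v..} x \<partial>lborel))"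
    using surv v p by (intro nn_integral_pareto_mixture_tail) auto
  then show ?thesis
    using nn_integral_indicator_gt[OF sigma_finite_measure_axioms Y v] v
    by (simp add: emeasure_eq_measure ennreal_mult)
qed

text \<open>Finiteness of the tail expectation is what forces g > 1, making every T k meaningful.\<close>
lemma set_integral_pareto_mixture_tail:
  fixes Y :: "'a \<Rightarrow> real"
  assumes "prob_space M" and Y[measurable]: "Y \<in> borel_measurable M"
    and surv: "\<And>x. 0 \<le> x \<Longrightarrow>
         (\<lambda>k. p k * (1 + x / a) powr - (g + real k)) sums measure M {\<omega>\<in>space M. x < Y \<omega>}"
    and p: "\<And>k. 0 \<le> p k" "0 < p 0" and a: "0 < a" and v: "0 \<le> v"
    and integ: "set_integrable M {\<omega>\<in>space M. v < Y \<omega>} Y"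
  defines "T \<equiv> \<lambda>k. p k * (a / (g + real k - 1) * (1 + v / a) powr - (g + real k - 1))"
  shows "summable T"
    and "(LINT \<omega>:{\<omega>\<in>space M. v < Y \<omega>}|M. Y \<omega>) = v * measure M {\<omega>\<in>space M. v < Y \<omega>} + suminf T"
proof -
  define A where "A = {\<omega>\<in>space M. v < Y \<omega>}"
  define tail where "tail s = (\<integral>\<^sup>+x. ennreal ((1 + x / a) powr - s) * indicator {v..} x \<partial>lborel)" for s
  have "integrable M (\<lambda>\<omega>. indicator A \<omega> * Y \<omega>)"
    using integ unfolding set_integrable_def A_def by simp
  then have "ennreal (LINT \<omega>:A|M. Y \<omega>) = (\<integral>\<^sup>+\<omega>. ennreal (indicator A \<omega> * Y \<omega>) \<partial>M)"
    using v unfolding set_lebesgue_integral_def A_def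
    by (simp add: nn_integral_eq_integral split: split_indicator)
  also have "\<dots> = ennreal (v * measure M A) + (\<Sum>k. ennreal (p k) * tail (g + real k))"
    unfolding A_def tail_def by (rule nn_integral_indicator_gt_pareto_mixture[OF assms(1) Y surv p(1) v])
  finally have LINT: "ennreal (LINT \<omega>:A|M. Y \<omega>) = ennreal (v * measure M A) + (\<Sum>k. ennreal (p k) * tail (g + real k))" .
  have "1 < g"
  proof (rule ccontr)
    assume "\<not> 1 < g"
    then have "ennreal (p 0) * tail g = \<infinity>"
      using nn_integral_pareto_tail_infinite[OF a _ v, of g] p(2) by (simp add: tail_def ennreal_mult_top)
    moreover have "ennreal (p 0) * tail (g + real 0) \<le> (\<Sum>k. ennreal (p k) * tail (g + real k))"
      using sum_le_suminf[OF summableI, of "{0}" "\<lambda>k. ennreal (p k) * tail (g + real k)"] by simp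
    ultimately show False using LINT by (simp add: top_unique)
  qed
  have T_nonneg: "0 \<le> T k" for k
    unfolding T_def using p(1) a \<open>1 < g\<close> by (intro mult_nonneg_nonneg) auto
  have "ennreal (p k) * tail (g + real k) = ennreal (T k)" for k
  proof -
    have "1 < g + real k" using \<open>1 < g\<close> by simp
    then have "tail (g + real k) = ennreal (a / (g + real k - 1) * (1 + v / a) powr - (g + real k - 1))"
      unfolding tail_def by (rule nn_integral_pareto_tail[OF a _ v])
    moreover have "0 \<le> a / (g + real k - 1) * (1 + v / a) powr - (g + real k - 1)"
      using a \<open>1 < g\<close> by simp
    ultimately show ?thesis using p(1) by (simp only: T_def ennreal_mult)
  qed
  then have LINT': "ennreal (LINT \<omega>:A|M. Y \<omega>) = ennreal (v * measure M A) + (\<Sum>k. ennreal (T k))"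
    using LINT by simp
  show T: "summable T"
    using LINT' by (intro summable_suminf_not_top[OF T_nonneg]) (auto simp: top_unique)
  have "ennreal (LINT \<omega>:A|M. Y \<omega>) = ennreal (v * measure M A + suminf T)"
    using LINT' v by (simp add: suminf_ennreal2[OF T_nonneg T] suminf_nonneg[OF T T_nonneg] ennreal_plus)
  moreover have "0 \<le> (LINT \<omega>:A|M. Y \<omega>)"
    unfolding set_lebesgue_integral_def A_def using v
    by (intro Bochner_Integration.integral_nonneg) (auto split: split_indicator)
  ultimately show "(LINT \<omega>:{\<omega>\<in>space M. v < Y \<omega>}|M. Y \<omega>)
      = v * measure M {\<omega>\<in>space M. v < Y \<omega>} + suminf T"
    using v suminf_nonneg[OF T T_nonneg] unfolding A_def by (subst (asm) ennreal_inj) auto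
qed

lemma CTE_pareto_mixture:
  fixes Y :: "'a \<Rightarrow> real"
  assumes "prob_space M" and Y[measurable]: "Y \<in> borel_measurable M"
    and Y_pos: "AE \<omega> in M. 0 < Y \<omega>"
    and surv: "\<And>x. 0 \<le> x \<Longrightarrow>
         (\<lambda>k. p k * (1 + x / a) powr - (g + real k)) sums measure M {\<omega>\<in>space M. x < Y \<omega>}"
    and p: "\<And>k. 0 \<le> p k" "0 < p 0" and a: "0 < a"
    and v: "0 \<le> v" "VaR M Y q = v" and q: "measure M {\<omega>\<in>space M. v < Y \<omega>} = 1 - q" "q < 1"
    and integ: "set_integrable M {\<omega> \<in> space M. VaR M Y q < Y \<omega>} Y"
  shows "CTE M Y q = integral\<^sup>L M Y * (\<Sum>k. (1 / integral\<^sup>L M Y) * (a / (g + real k - 1)) * p k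
            * (1 + v / a) powr - (g + real k - 1)) / (1 - q) + v"
proof -
  interpret prob_space M by (rule assms(1))
  define T where "T = (\<lambda>k. p k * (a / (g + real k - 1) * (1 + v / a) powr - (g + real k - 1)))"
  have integ': "set_integrable M {\<omega>\<in>space M. v < Y \<omega>} Y" using integ v(2) by simp
  note tail = set_integral_pareto_mixture_tail[OF assms(1) Y surv p a v(1) integ', folded T_def]
  have "AE \<omega> in M. 0 \<le> Y \<omega>" using Y_pos by eventually_elim simp
  then have "0 < integral\<^sup>L M Y"
    using Y_pos integrable_of_set_integrable_gt[OF finite_measure_axioms Y _ integ']
    by (intro integral_pos_of_AE_pos) auto
  moreover have "(\<Sum>k. (1 / integral\<^sup>L M Y) * (a / (g + real k - 1)) * p k * (1 + v / a) powr - (g + real k - 1))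
      = (1 / integral\<^sup>L M Y) * suminf T"
    using suminf_mult[OF tail(1), of "1 / integral\<^sup>L M Y"] by (simp add: T_def mult_ac)
  moreover have "CTE M Y q = (v * (1 - q) + suminf T) / (1 - q)"
    using tail(2) q(1) by (simp add: CTE_def v(2))
  ultimately show ?thesis using q(2) by (simp add: field_simps)
qed

section \<open>Value-at-risk and the minimum X_-\<close>

lemma (in prob_space) VaR_eq_of_survival:
  assumes [measurable]: "Y \<in> borel_measurable M"
    and surv: "\<And>x. 0 \<le> x \<Longrightarrow> measure M {\<omega>\<in>space M. x < Y \<omega>} = F x"
    and F_less: "\<And>x y. 0 \<le> x \<Longrightarrow> x < y \<Longrightarrow> F y < F x"
    and v: "0 \<le> v" "F v = 1 - q"
  shows "VaR M Y q = v"
proof -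
  have "q \<le> measure M {\<omega>\<in>space M. Y \<omega> \<le> x} \<longleftrightarrow> v \<le> x" if "0 \<le> x" for x
  proof -
    have "{\<omega>\<in>space M. Y \<omega> \<le> x} = space M - {\<omega>\<in>space M. x < Y \<omega>}" by auto
    then have "measure M {\<omega>\<in>space M. Y \<omega> \<le> x} = 1 - F x"
      using prob_compl[of "{\<omega>\<in>space M. x < Y \<omega>}"] surv[OF that] by simp
    moreover have "F x \<le> F v \<longleftrightarrow> v \<le> x"
      using F_less[OF that, of v] F_less[OF v(1), of x] by (cases x v rule: linorder_cases) auto
    ultimately show ?thesis using v(2) by linarith
  qed
  then have "{x. 0 \<le> x \<and> q \<le> measure M {\<omega>\<in>space M. Y \<omega> \<le> x}} = {v..}"
    using v(1) by auto
  then show ?thesis by (simp add: VaR_def)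
qed

lemma (in prob_space) prob_gt_0_eq_1:
  fixes Y :: "'a \<Rightarrow> real" and F :: "real \<Rightarrow> real"
  assumes [measurable]: "Y \<in> borel_measurable M"
    and surv: "\<And>x. 0 < x \<Longrightarrow> measure M {\<omega>\<in>space M. x < Y \<omega>} = F x"
    and F: "(F \<longlongrightarrow> 1) (at_right 0)"
  shows "measure M {\<omega>\<in>space M. 0 < Y \<omega>} = 1"
proof (rule antisym)
  have "\<forall>\<^sub>F x in at_right 0. F x \<le> measure M {\<omega>\<in>space M. 0 < Y \<omega>}"
  proof (rule eventually_at_rightI[of 0 1])
    fix x :: real assume "x \<in> {0<..<1}"
    then have "measure M {\<omega>\<in>space M. x < Y \<omega>} \<le> measure M {\<omega>\<in>space M. 0 < Y \<omega>}"
      by (intro finite_measure_mono) auto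
    then show "F x \<le> measure M {\<omega>\<in>space M. 0 < Y \<omega>}"
      using surv \<open>x \<in> {0<..<1}\<close> by simp
  qed simp
  from tendsto_le[OF _ tendsto_const F this] show "1 \<le> measure M {\<omega>\<in>space M. 0 < Y \<omega>}"
    by simp
qed simp

lemma alpha_col_pos:
  assumes "\<forall>i<n. 0 \<le> c i j" "\<exists>i<n. 0 < c i j" "\<forall>i<n. 0 < \<sigma> i"
  shows "0 < alpha_col n c \<sigma> j"
proof -
  obtain i where "i < n" "0 < c i j" using assms(2) by blast
  then have "0 < (\<Sum>i<n. c i j / \<sigma> i)"
    using assms(1,3) by (intro sum_pos2[of _ i]) auto
  then show ?thesis by (simp add: alpha_col_def)
qed

context
  fixes n :: nat and c :: "nat \<Rightarrow> nat \<Rightarrow> real" and \<sigma> \<gamma> :: "nat \<Rightarrow> real"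
  assumes \<alpha>_pos: "\<forall>j\<le>n. 0 < alpha_col n c \<sigma> j" and \<gamma>_pos: "\<forall>j\<le>n. 0 < \<gamma> j"
begin

lemma alpha_col_le_alpha_plus: "j \<le> n \<Longrightarrow> alpha_col n c \<sigma> j \<le> alpha_plus n c \<sigma>"
  unfolding alpha_plus_def by (intro Max_ge) auto

lemma alpha_plus_pos: "0 < alpha_plus n c \<sigma>"
  using \<alpha>_pos alpha_col_le_alpha_plus[of 0] by force

lemma p_seq_sums:
  assumes "0 \<le> x"
  shows "(\<lambda>k. p_seq n c \<sigma> \<gamma> k * (1 + x / alpha_plus n c \<sigma>) powr - ((\<Sum>j\<le>n. \<gamma> j) + real k))
           sums pareto_prod_surv n (alpha_col n c \<sigma>) \<gamma> x"
  using pareto_prod_surv_sums[OF \<alpha>_pos \<gamma>_pos assms] alpha_col_le_alpha_plus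
  by (simp add: p_seq_def c_plus_def mult.assoc)

lemma
  shows p_seq_nonneg: "0 \<le> p_seq n c \<sigma> \<gamma> k" and p_seq_0_pos: "0 < p_seq n c \<sigma> \<gamma> 0"
proof -
  have r: "\<forall>j\<le>n. 0 < alpha_col n c \<sigma> j / alpha_plus n c \<sigma>"
    "\<forall>j\<le>n. alpha_col n c \<sigma> j / alpha_plus n c \<sigma> \<le> 1"
    using \<alpha>_pos alpha_plus_pos alpha_col_le_alpha_plus by auto
  have "0 < c_plus n c \<sigma> \<gamma>" unfolding c_plus_def using r(1) by (intro prod_pos) auto
  then show "0 \<le> p_seq n c \<sigma> \<gamma> k" "0 < p_seq n c \<sigma> \<gamma> 0"
    unfolding p_seq_def using delta_seq_nonneg[OF r \<gamma>_pos] by auto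
qed

lemma prob_Min_gt:
  fixes M :: "'a measure" and X :: "nat \<Rightarrow> 'a \<Rightarrow> real"
  assumes "prob_space M" and X_rv: "\<forall>i<n. X i \<in> borel_measurable M" and "0 < n"
    and X_surv: "\<forall>x::nat \<Rightarrow> real. (\<forall>i<n. 0 < x i) \<longrightarrow>
         measure M {\<omega> \<in> space M. \<forall>i<n. x i < X i \<omega>}
           = (\<Prod>j\<le>n. (1 + (\<Sum>i<n. c i j * x i / \<sigma> i)) powr (- \<gamma> j))"
    and x: "0 \<le> x"
  shows "measure M {\<omega>\<in>space M. x < Min ((\<lambda>i. X i \<omega>) ` {..<n})}
       = pareto_prod_surv n (alpha_col n c \<sigma>) \<gamma> x"
proof -
  interpret prob_space M by (rule assms(1))
  let ?S = "pareto_prod_surv n (alpha_col n c \<sigma>) \<gamma>"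
  have pos: "measure M {\<omega>\<in>space M. x < Min ((\<lambda>i. X i \<omega>) ` {..<n})} = ?S x" if "0 < x" for x
  proof -
    have "{\<omega>\<in>space M. x < Min ((\<lambda>i. X i \<omega>) ` {..<n})} = {\<omega>\<in>space M. \<forall>i<n. x < X i \<omega>}"
      using \<open>0 < n\<close> by (subst Min_gr_iff) auto
    moreover have "(\<Sum>i<n. c i j * x / \<sigma> i) = x / alpha_col n c \<sigma> j" for j
      by (simp add: alpha_col_def sum_distrib_left divide_inverse mult_ac)
    ultimately show ?thesis
      using X_surv[rule_format, of "\<lambda>_. x"] that by (simp add: pareto_prod_surv_def)
  qed
  have "(?S \<longlongrightarrow> 1) (at_right 0)"
    using continuous_on_Icc_at_rightD[OF continuous_on_subset[OF
        continuous_on_pareto_prod_surv[OF \<alpha>_pos \<gamma>_pos], of "{0..1}"]] by simp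
  moreover have "(\<lambda>\<omega>. Min ((\<lambda>i. X i \<omega>) ` {..<n})) \<in> borel_measurable M"
    using X_rv by (intro borel_measurable_Min) auto
  ultimately have "measure M {\<omega>\<in>space M. 0 < Min ((\<lambda>i. X i \<omega>) ` {..<n})} = 1"
    using pos by (intro prob_gt_0_eq_1) auto
  then show ?thesis using pos x by (cases "x = 0") auto
qed

lemma CTE_eq_of_pareto_prod_surv:
  fixes Y :: "'a \<Rightarrow> real"
  assumes M: "prob_space M" and Y[measurable]: "Y \<in> borel_measurable M"
    and surv: "\<And>x. 0 \<le> x \<Longrightarrow> measure M {\<omega>\<in>space M. x < Y \<omega>} = pareto_prod_surv n (alpha_col n c \<sigma>) \<gamma> x"
    and q: "0 \<le> q" "q < 1"
    and integ: "set_integrable M {\<omega>\<in>space M. VaR M Y q < Y \<omega>} Y"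
  shows "CTE M Y q = integral\<^sup>L M Y * (\<Sum>k. (1 / integral\<^sup>L M Y)
            * (alpha_plus n c \<sigma> / ((\<Sum>j\<le>n. \<gamma> j) + real k - 1)) * p_seq n c \<sigma> \<gamma> k
            * (1 + VaR M Y q / alpha_plus n c \<sigma>) powr - ((\<Sum>j\<le>n. \<gamma> j) + real k - 1)) / (1 - q)
          + VaR M Y q"
proof -
  interpret prob_space M by (rule M)
  obtain v where v: "0 \<le> v" "pareto_prod_surv n (alpha_col n c \<sigma>) \<gamma> v = 1 - q"
    using pareto_prod_surv_attains[OF \<alpha>_pos \<gamma>_pos, of "1 - q"] q by auto
  have VaR: "VaR M Y q = v"
    using VaR_eq_of_survival[OF Y surv pareto_prod_surv_strict_antimono[OF \<alpha>_pos \<gamma>_pos] v] .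
  have "AE \<omega> in M. 0 < Y \<omega>"
    using AE_prob_1[of "{\<omega>\<in>space M. 0 < Y \<omega>}"] surv[of 0] by simp
  moreover have "(\<lambda>k. p_seq n c \<sigma> \<gamma> k * (1 + x / alpha_plus n c \<sigma>) powr - ((\<Sum>j\<le>n. \<gamma> j) + real k))
      sums measure M {\<omega>\<in>space M. x < Y \<omega>}" if "0 \<le> x" for x
    unfolding surv[OF that] using p_seq_sums[OF that] .
  moreover have "measure M {\<omega>\<in>space M. v < Y \<omega>} = 1 - q" using surv[OF v(1)] v(2) by simp
  ultimately show ?thesis unfolding VaR
    by (rule CTE_pareto_mixture[where p = "p_seq n c \<sigma> \<gamma>", OF M Y _ _ p_seq_nonneg p_seq_0_pos
          alpha_plus_pos v(1) VaR _ q(2) integ])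
qed

end

theorem proposition4p2:
  fixes M :: "'a measure" and n :: nat
    and c :: "nat \<Rightarrow> nat \<Rightarrow> real" and \<sigma> \<gamma> :: "nat \<Rightarrow> real"
    and X :: "nat \<Rightarrow> 'a \<Rightarrow> real" and q :: real
  assumes M: "prob_space M"
    and c01: "\<forall>i<n. \<forall>j\<le>n. c i j \<in> {0, 1}"
    and rows: "\<forall>i<n. \<exists>j\<le>n. c i j = 1"
    and cols: "\<forall>j\<le>n. \<exists>i<n. c i j = 1"
    and \<sigma>_pos: "\<forall>i<n. 0 < \<sigma> i"
    and \<gamma>_pos: "\<forall>j\<le>n. 0 < \<gamma> j"
    and X_rv: "\<forall>i<n. X i \<in> borel_measurable M"
    and X_surv: "\<forall>x::nat \<Rightarrow> real. (\<forall>i<n. 0 < x i) \<longrightarrow>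
         measure M {\<omega> \<in> space M. \<forall>i<n. x i < X i \<omega>}
           = (\<Prod>j\<le>n. (1 + (\<Sum>i<n. c i j * x i / \<sigma> i)) powr (- \<gamma> j))"
    and q: "0 \<le> q" "q < 1"
    and CTE_finite: "set_integrable M
         {\<omega> \<in> space M. VaR M (\<lambda>\<omega>. Min ((\<lambda>i. X i \<omega>) ` {..<n})) q
                          < Min ((\<lambda>i. X i \<omega>) ` {..<n})}
         (\<lambda>\<omega>. Min ((\<lambda>i. X i \<omega>) ` {..<n}))"
  shows "let Xmin = (\<lambda>\<omega>. Min ((\<lambda>i. X i \<omega>) ` {..<n}));
             EXmin = integral\<^sup>L M Xmin;
             a = alpha_plus n c \<sigma>;
             gs = (\<Sum>j\<le>n. \<gamma> j);
             qk = (\<lambda>k. (1 / EXmin) * (a / (gs + real k - 1)) * p_seq n c \<sigma> \<gamma> k);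
             Fstar = (\<lambda>x. \<Sum>k. qk k * (1 + x / a) powr (- (gs + real k - 1)));
             v = VaR M Xmin q
         in CTE M Xmin q = EXmin * Fstar v / (1 - q) + v"
proof -
  interpret prob_space M by (rule M)
  define Y where "Y = (\<lambda>\<omega>. Min ((\<lambda>i. X i \<omega>) ` {..<n}))"
  have Y[measurable]: "Y \<in> borel_measurable M"
    unfolding Y_def using X_rv by (intro borel_measurable_Min) auto
  have \<alpha>: "\<forall>j\<le>n. 0 < alpha_col n c \<sigma> j"
  proof (intro allI impI)
    fix j assume "j \<le> n"
    then have "\<forall>i<n. c i j \<in> {0, 1}" "\<exists>i<n. c i j = 1" using c01 cols by blast+
    then have "\<forall>i<n. 0 \<le> c i j" "\<exists>i<n. 0 < c i j" by fastforce+
    then show "0 < alpha_col n c \<sigma> j" using \<sigma>_pos by (intro alpha_col_pos)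
  qed
  have "0 < n" using cols by auto
  have "measure M {\<omega>\<in>space M. x < Y \<omega>} = pareto_prod_surv n (alpha_col n c \<sigma>) \<gamma> x"
    if "0 \<le> x" for x
    unfolding Y_def using prob_Min_gt[OF \<alpha> \<gamma>_pos M X_rv \<open>0 < n\<close> X_surv that] .
  moreover have "set_integrable M {\<omega>\<in>space M. VaR M Y q < Y \<omega>} Y"
    using CTE_finite unfolding Y_def .
  ultimately show ?thesis
    unfolding Let_def Y_def[symmetric] by (rule CTE_eq_of_pareto_prod_surv[OF \<alpha> \<gamma>_pos M Y _ q])
qed

end
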